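(* Let $\mathsf P$ be a network coding problem, let $\mathcal T\subseteq\mathcal S\cup\mathcal E$ be nonempty, and let $h\in\mathcal H[\mathcal S\cup\mathcal E]$ be the atomic function defined by $h(\beta)=1$ if $\beta\cap\mathcal T\ne\emptyset$ and $h(\beta)=0$ otherwise. Then $\mathcal T$ is a routing subnetwork for $\mathsf P$ if and only if $h\in\mathcal C_T(\mathsf P)\cap\mathcal C_I(\mathsf P)$.
   Context: A network is $\mathsf G=(\mathcal V,\mathcal E)$, $\mathcal V$ a finite set of nodes, $\mathcal E$ a finite set of hyperedges, each $e$ with tail $\mathrm{tail}(e)\in\mathcal V$ and head $\mathrm{head}(e)\subseteq\mathcal V$, without directed cycles (no nonempty sequence of links $f_1,\dots,f_k$ with $\mathrm{tail}(f_i)\in\mathrm{head}(f_{i-1})$ for $i\ge2$ and $\mathrm{tail}(f_1)\in\mathrm{head}(f_k)$). A connection constraint $\mathsf M=(\mathcal S,O,D)$: finite source index set $\mathcal S$ (disjoint from $\mathcal E$), $O:\mathcal S\to2^{\mathcal V}$ (where source $s$ is available), $D:\mathcal S\to2^{\mathcal V}$ (sinks). $\mathsf P=(\mathsf G,\mathsf M)$. Sources are imaginary edges with $\mathrm{head}(s)=O(s)$; $\mathrm{in}(e)=\{f\in\mathcal S\cup\mathcal E:\mathrm{tail}(e)\in\mathrm{head}(f)\}$ for $e\in\mathcal E$. A routing subnetwork is a subset $\mathcal T\subseteq\mathcal S\cup\mathcal E$ with $|\mathcal T\cap\mathcal S|=1$ such that $\mathrm{in}(e)\cap\mathcal T\ne\emptyset$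 for every $e\in\mathcal T\cap\mathcal E$. $\mathcal H[\mathcal S\cup\mathcal E]$ is the set of real functions on subsets of $\mathcal S\cup\mathcal E$, $h(\alpha\mid\beta)=h(\alpha\cup\beta)-h(\beta)$. $\mathcal C_I(\mathsf P)=\{h:h(\mathcal S)=\sum_{s\in\mathcal S}h(s)\}$, $\mathcal C_T(\mathsf P)=\{h:h(e\mid\mathrm{in}(e))=0\ \forall e\in\mathcal E\}$. *)

theory Defs
  imports Complex_Main
begin

text \<open>A network coding problem P = (G, M). Nodes have type 'v; sources and
  hyperedges (links) share the type 'e, so that subsets of S \<union> E are of type 'e set.\<close>

record ('v, 'e) ncp =
  nodes   :: "'v set"
  edges   :: "'e set"
  tl      :: "'e \<Rightarrow> 'v"
  hd      :: "'e \<Rightarrow> 'v set"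
  sources :: "'e set"
  orig    :: "'e \<Rightarrow> 'v set"
  dest    :: "'e \<Rightarrow> 'v set"

definition no_directed_cycle :: "('v, 'e) ncp \<Rightarrow> bool" where
  "no_directed_cycle P \<longleftrightarrow>
     \<not> (\<exists>fs. fs \<noteq> [] \<and> set fs \<subseteq> edges P \<and>
           (\<forall>i. 0 < i \<and> i < length fs \<longrightarrow> tl P (fs ! i) \<in> hd P (fs ! (i - 1))) \<and>
           tl P (List.hd fs) \<in> hd P (last fs))"

definition network_coding_problem :: "('v, 'e) ncp \<Rightarrow> bool" where
  "network_coding_problem P \<longleftrightarrow>
     finite (nodes P) \<and> finite (edges P) \<and> finite (sources P) \<and>
     sources P \<inter> edges P = {} \<and>
     (\<forall>e \<in> edges P. tl P e \<in> nodes P \<and> hd P e \<subseteq> nodes P) \<and>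
     (\<forall>s \<in> sources P. orig P s \<subseteq> nodes P \<and> dest P s \<subseteq> nodes P) \<and>
     no_directed_cycle P"

text \<open>Sources are imaginary edges with head(s) = O(s).\<close>
definition ghead :: "('v, 'e) ncp \<Rightarrow> 'e \<Rightarrow> 'v set" where
  "ghead P f = (if f \<in> sources P then orig P f else hd P f)"

definition inc :: "('v, 'e) ncp \<Rightarrow> 'e \<Rightarrow> 'e set" where
  "inc P e = {f \<in> sources P \<union> edges P. tl P e \<in> ghead P f}"

definition routing_subnetwork :: "('v, 'e) ncp \<Rightarrow> 'e set \<Rightarrow> bool" where
  "routing_subnetwork P T \<longleftrightarrow>
     T \<subseteq> sources P \<union> edges P \<and> card (T \<inter> sources P) = 1 \<and>
     (\<forall>e \<in> T \<inter> edges P. inc P e \<inter> T \<noteq> {})"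

definition cond :: "('e set \<Rightarrow> real) \<Rightarrow> 'e set \<Rightarrow> 'e set \<Rightarrow> real" where
  "cond h \<alpha> \<beta> = h (\<alpha> \<union> \<beta>) - h \<beta>"

definition C_I :: "('v, 'e) ncp \<Rightarrow> ('e set \<Rightarrow> real) set" where
  "C_I P = {h. h (sources P) = (\<Sum>s \<in> sources P. h {s})}"

definition C_T :: "('v, 'e) ncp \<Rightarrow> ('e set \<Rightarrow> real) set" where
  "C_T P = {h. \<forall>e \<in> edges P. cond h {e} (inc P e) = 0}"

definition atomic_fun :: "'e set \<Rightarrow> 'e set \<Rightarrow> real" where
  "atomic_fun T \<beta> = (if \<beta> \<inter> T \<noteq> {} then 1 else 0)"

end

theory Submission
  imports Defs
begin

text \<open>For the atomic function of \<open>T\<close>, the independence constraint compares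
  \<open>h(S) \<in> {0, 1}\<close> with \<open>\<Sum>\<^sub>s h{s} = |T \<inter> S|\<close>, so it says \<open>|T \<inter> S| \<le> 1\<close>; the
  transmission constraint \<open>h(e | in(e)) = 0\<close> fails exactly when \<open>e \<in> T\<close> and
  \<open>in(e) \<inter> T = {}\<close>.  Together these give every defining property of a routing
  subnetwork except that \<open>T\<close> meets \<open>S\<close>.  If it did not, \<open>T\<close> would be a finite
  nonempty set of links each fed by another link of \<open>T\<close>; following feeding links
  backwards must revisit a link, producing a directed cycle.\<close>

lemma sum_atomic_fun_singletons:
  assumes "finite S"
  shows "(\<Sum>s\<in>S. atomic_fun T {s}) = real (card (T \<inter> S))"
proof -
  have "(\<Sum>s\<in>S. atomic_fun T {s}) = (\<Sum>s\<in>S. if s \<in> T then 1 else 0)"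
    by (rule sum.cong) (auto simp: atomic_fun_def)
  also have "\<dots> = real (card (T \<inter> S))"
    using assms by (simp add: sum.If_cases Int_commute)
  finally show ?thesis .
qed

lemma atomic_fun_in_C_I_iff:
  assumes "finite (sources P)"
  shows "atomic_fun T \<in> C_I P \<longleftrightarrow> card (T \<inter> sources P) \<le> 1"
proof -
  have fin: "finite (T \<inter> sources P)" using assms by simp
  have "atomic_fun T \<in> C_I P \<longleftrightarrow> atomic_fun T (sources P) = real (card (T \<inter> sources P))"
    using sum_atomic_fun_singletons[OF assms] by (simp add: C_I_def)
  also have "\<dots> \<longleftrightarrow> card (T \<inter> sources P) \<le> 1"
    using fin card_gt_0_iff[of "T \<inter> sources P"]
    by (auto simp: atomic_fun_def Int_commute)
  finally show ?thesis .
qed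

lemma atomic_fun_in_C_T_iff:
  "atomic_fun T \<in> C_T P \<longleftrightarrow> (\<forall>e \<in> T \<inter> edges P. inc P e \<inter> T \<noteq> {})"
  by (auto simp: C_T_def cond_def atomic_fun_def)

lemma not_no_directed_cycle_if_backward_walk_repeats:
  assumes walk: "\<And>n. x n \<in> edges P" "\<And>n. tl P (x n) \<in> hd P (x (Suc n))"
    and repeat: "i < j" "x i = x j"
  shows "\<not> no_directed_cycle P"
proof -
  text \<open>The cycle traverses \<open>x j, x (j - 1), \<dots>, x (i + 1)\<close> and closes up via \<open>x i = x j\<close>.\<close>
  define fs where "fs = map (\<lambda>m. x (j - m)) [0..<j - i]"
  have len: "length fs = j - i" and nth: "\<And>m. m < j - i \<Longrightarrow> fs ! m = x (j - m)"
    by (simp_all add: fs_def)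
  have "fs \<noteq> []" using repeat by (simp add: fs_def)
  moreover have "set fs \<subseteq> edges P" using walk by (auto simp: fs_def)
  moreover have "tl P (fs ! k) \<in> hd P (fs ! (k - 1))" if "0 < k" "k < length fs" for k
  proof -
    have "j - (k - 1) = Suc (j - k)" using that len by auto
    then show ?thesis using that len nth[of k] nth[of "k - 1"] walk(2)[of "j - k"] by auto
  qed
  moreover have "tl P (List.hd fs) \<in> hd P (last fs)"
  proof -
    have "List.hd fs = x j" using repeat by (simp add: fs_def upt_conv_Cons)
    moreover have "last fs = x (Suc i)"
      using \<open>fs \<noteq> []\<close> len nth[of "j - i - 1"] repeat
      by (simp add: last_conv_nth Suc_diff_Suc)
    ultimately show ?thesis using walk(2)[of i] repeat by simp
  qed
  ultimately show ?thesis unfolding no_directed_cycle_def by blast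
qed

lemma no_directed_cycle_has_unfed_edge:
  assumes "no_directed_cycle P" and "T \<subseteq> edges P" "finite T" "T \<noteq> {}"
  shows "\<exists>e\<in>T. \<forall>f\<in>T. tl P e \<notin> hd P f"
proof (rule ccontr)
  assume "\<not> ?thesis"
  then obtain p where p: "\<And>e. e \<in> T \<Longrightarrow> p e \<in> T \<and> tl P e \<in> hd P (p e)"
    by metis
  obtain e0 where "e0 \<in> T" using \<open>T \<noteq> {}\<close> by auto
  define x where "x n = (p ^^ n) e0" for n
  have xT: "x n \<in> T" for n by (induction n) (auto simp: x_def \<open>e0 \<in> T\<close> p)
  have "\<not> inj x"
    using finite_imageD[of x UNIV] finite_subset[of "range x" T] xT \<open>finite T\<close> by auto
  then obtain i j where "i < j" "x i = x j"
    unfolding inj_def by (metis linorder_neqE_nat)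
  moreover have "tl P (x n) \<in> hd P (x (Suc n))" for n using p[OF xT[of n]] by (simp add: x_def)
  ultimately show False
    using not_no_directed_cycle_if_backward_walk_repeats[of x P] xT \<open>T \<subseteq> edges P\<close>
      \<open>no_directed_cycle P\<close> by blast
qed

theorem proposition6:
  fixes P :: "('v, 'e) ncp" and T :: "'e set" and h :: "'e set \<Rightarrow> real"
  assumes "network_coding_problem P"
    and "T \<subseteq> sources P \<union> edges P" and "T \<noteq> {}"
    and "h = atomic_fun T"
  shows "routing_subnetwork P T \<longleftrightarrow> h \<in> C_T P \<inter> C_I P"
proof -
  have finS: "finite (sources P)" and finE: "finite (edges P)" and acyclic: "no_directed_cycle P"
    using assms(1) unfolding network_coding_problem_def by auto
  have finT: "finite T" using assms(2) finS finE by (meson finite_UnI finite_subset)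
  have meets_sources: "T \<inter> sources P \<noteq> {}" if fed: "\<forall>e \<in> T \<inter> edges P. inc P e \<inter> T \<noteq> {}"
  proof
    assume "T \<inter> sources P = {}"
    with assms(2) have "T \<subseteq> edges P" by auto
    with fed \<open>T \<inter> sources P = {}\<close> have "\<forall>e\<in>T. \<exists>f\<in>T. tl P e \<in> hd P f"
      by (fastforce simp: inc_def ghead_def)
    with no_directed_cycle_has_unfed_edge[OF acyclic \<open>T \<subseteq> edges P\<close> finT assms(3)]
    show False by blast
  qed
  have "card (T \<inter> sources P) = 1 \<longleftrightarrow> T \<inter> sources P \<noteq> {} \<and> card (T \<inter> sources P) \<le> 1"
    using finT by (auto simp: le_Suc_eq card_0_eq)
  then show ?thesis
    using meets_sources assms(2,4) atomic_fun_in_C_I_iff[OF finS] atomic_fun_in_C_T_iff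
    unfolding routing_subnetwork_def by blast
qed

end
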